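(* Let $\bar F,\bar G\in C^1([a,b],\mathbb{R}_\mathcal{I})$. Then $$\bar F(b)\bar G(b)-\bar F(a)\bar G(a)=(IR)\int_a^b\bar F'(t)\bar G(t)\,dt+(IR)\int_a^b\bar F(t)\bar G'(t)\,dt.$$
   Context: An interval number is a closed interval $\bar a=[a_l,a_r]$ with $a_l<a_r$ real; $\mathbb{R}_\mathcal{I}$ is the set of interval numbers. Write $a_c=(a_l+a_r)/2$, $a_w=(a_r-a_l)/2>0$, $\bar a=\langle a_c;a_w\rangle=[a_c-a_w,a_c+a_w]$. Operations: $\bar a+\bar b=\langle a_c+b_c;a_wb_w\rangle$, $\bar a-\bar b=\langle a_c-b_c;a_w/b_w\rangle$, $k\bar a=\langle ka_c;a_w^k\rangle$ for real $k$, $\bar a\bar b=\langle a_cb_c;e^{\ln a_w\ln b_w}\rangle$; for real $h\ne0$, $\bar c/h=\langle c_c/h;c_w^{1/h}\rangle$. Distance $d(\bar a,\bar b)=\sqrt{(a_c-b_c)^2+(\ln a_w-\ln b_w)^2}$; continuity and limits w.r.t. $d$. Derivative: $\bar F'(x)=\lim_{h\to0}\frac{\bar F(x+h)-\bar F(x)}{h}$; $C^1([a,b],\mathbb{R}_\mathcal{I})$ is the set of interval-valued functions on $[a,b]$ that are differentiable on $[a,b]$ with continuous derivative. Products of interval-valued functions are pointwise. Interval Riemann integral: $\bar A=(IR)\int_a^b\bar f$ if for every $\varepsilon>0$ there is $\delta>0$ such that for every partition $a=t_0<\dots<t_n=b$ with mesh $<\delta$ and tags $\xi_i\in[t_{i-1},t_i]$,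 $d(\sum_i(t_i-t_{i-1})\bar f(\xi_i),\bar A)<\varepsilon$. *)

theory Defs
  imports Complex_Main
begin

typedef inum = "{(l::real, r::real). l < r}"
  by (rule exI[of _ "(0,1)"]) simp

definition ilo :: "inum \<Rightarrow> real" where "ilo a = fst (Rep_inum a)"
definition ihi :: "inum \<Rightarrow> real" where "ihi a = snd (Rep_inum a)"

definition ctr :: "inum \<Rightarrow> real" where "ctr a = (ilo a + ihi a) / 2"
definition wid :: "inum \<Rightarrow> real" where "wid a = (ihi a - ilo a) / 2"

text \<open>the interval number with centre c and width w (meant for w > 0)\<close>
definition mk :: "real \<Rightarrow> real \<Rightarrow> inum" where "mk c w = Abs_inum (c - w, c + w)"

definition iadd :: "inum \<Rightarrow> inum \<Rightarrow> inum" where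
  "iadd a b = mk (ctr a + ctr b) (wid a * wid b)"
definition isub :: "inum \<Rightarrow> inum \<Rightarrow> inum" where
  "isub a b = mk (ctr a - ctr b) (wid a / wid b)"
definition iscale :: "real \<Rightarrow> inum \<Rightarrow> inum" where
  "iscale k a = mk (k * ctr a) (wid a powr k)"
definition imul :: "inum \<Rightarrow> inum \<Rightarrow> inum" where
  "imul a b = mk (ctr a * ctr b) (exp (ln (wid a) * ln (wid b)))"
definition idivr :: "inum \<Rightarrow> real \<Rightarrow> inum" where
  "idivr c h = mk (ctr c / h) (wid c powr (1 / h))"

definition idist :: "inum \<Rightarrow> inum \<Rightarrow> real" where
  "idist a b = sqrt ((ctr a - ctr b)^2 + (ln (wid a) - ln (wid b))^2)"

text \<open>neutral element of iadd: centre 0, width 1\<close>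
definition izero :: inum where "izero = mk 0 1"

fun isum :: "(nat \<Rightarrow> inum) \<Rightarrow> nat \<Rightarrow> inum" where
  "isum g 0 = izero"
| "isum g (Suc n) = iadd (isum g n) (g (Suc n))"

definition ihas_deriv_within :: "(real \<Rightarrow> inum) \<Rightarrow> inum \<Rightarrow> real \<Rightarrow> real \<Rightarrow> real \<Rightarrow> bool" where
  "ihas_deriv_within F D x a b \<longleftrightarrow>
     (\<forall>\<epsilon>>0. \<exists>\<delta>>0. \<forall>h. h \<noteq> 0 \<and> \<bar>h\<bar> < \<delta> \<and> x + h \<in> {a..b} \<longrightarrow>
        idist (idivr (isub (F (x + h)) (F x)) h) D < \<epsilon>)"

definition icontinuous_on :: "real \<Rightarrow> real \<Rightarrow> (real \<Rightarrow> inum) \<Rightarrow> bool" where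
  "icontinuous_on a b F \<longleftrightarrow>
     (\<forall>x\<in>{a..b}. \<forall>\<epsilon>>0. \<exists>\<delta>>0. \<forall>y\<in>{a..b}. \<bar>y - x\<bar> < \<delta> \<longrightarrow> idist (F y) (F x) < \<epsilon>)"

definition iC1_with_deriv :: "real \<Rightarrow> real \<Rightarrow> (real \<Rightarrow> inum) \<Rightarrow> (real \<Rightarrow> inum) \<Rightarrow> bool" where
  "iC1_with_deriv a b F F' \<longleftrightarrow>
     (\<forall>x\<in>{a..b}. ihas_deriv_within F (F' x) x a b) \<and> icontinuous_on a b F'"

definition ihas_IR_integral :: "(real \<Rightarrow> inum) \<Rightarrow> inum \<Rightarrow> real \<Rightarrow> real \<Rightarrow> bool" where
  "ihas_IR_integral f A a b \<longleftrightarrow>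
     (\<forall>\<epsilon>>0. \<exists>\<delta>>0. \<forall>n (t::nat \<Rightarrow> real) (\<xi>::nat \<Rightarrow> real).
        t 0 = a \<and> t n = b \<and> (\<forall>i\<in>{1..n}. t (i - 1) < t i \<and> t i - t (i - 1) < \<delta>
          \<and> t (i - 1) \<le> \<xi> i \<and> \<xi> i \<le> t i)
        \<longrightarrow> idist (isum (\<lambda>i. iscale (t i - t (i - 1)) (f (\<xi> i))) n) A < \<epsilon>)"

end

theory Submission
  imports Defs "HOL-Analysis.Analysis"
begin

(* The map sending x to (ctr x, ln (wid x)) is a bijection from interval numbers onto real^2 that
   turns iadd, isub, iscale and idivr into the vector space operations, imul into the
   componentwise product (a bounded bilinear map) and idist into the Euclidean distance.
   In these coordinates the interval derivative is the ordinary vector derivative, the interval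
   Riemann integral of a continuous function is its ordinary integral, and the theorem becomes
   integration by parts for a bounded bilinear product. *)

definition inum_coords :: "inum \<Rightarrow> real \<times> real" where
  "inum_coords x = (ctr x, ln (wid x))"

definition inum_of_coords :: "real \<times> real \<Rightarrow> inum" where
  "inum_of_coords p = mk (fst p) (exp (snd p))"

lemma wid_pos: "wid x > 0"
  using Rep_inum[of x] by (auto simp: wid_def ilo_def ihi_def split: prod.splits)

lemma Rep_inum_mk: "w > 0 \<Longrightarrow> Rep_inum (mk c w) = (c - w, c + w)"
  unfolding mk_def by (rule Abs_inum_inverse) simp

lemma ctr_mk [simp]: "w > 0 \<Longrightarrow> ctr (mk c w) = c"
  by (simp add: ctr_def ilo_def ihi_def Rep_inum_mk)

lemma wid_mk [simp]: "w > 0 \<Longrightarrow> wid (mk c w) = w"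
  by (simp add: wid_def ilo_def ihi_def Rep_inum_mk)

lemma inum_coords_of_coords [simp]: "inum_coords (inum_of_coords p) = p"
  by (simp add: inum_coords_def inum_of_coords_def)

lemma inj_inum_coords: "inj inum_coords"
proof (rule injI)
  fix x y assume "inum_coords x = inum_coords y"
  then have "ctr x = ctr y" "wid x = wid y"
    using wid_pos[of x] wid_pos[of y] by (simp_all add: inum_coords_def)
  then have "ilo x = ilo y" "ihi x = ihi y"
    by (simp_all add: ctr_def wid_def)
  then show "x = y"
    by (metis Rep_inum_inject ilo_def ihi_def prod.expand)
qed

definition pair_mult :: "real \<times> real \<Rightarrow> real \<times> real \<Rightarrow> real \<times> real" where
  "pair_mult p q = (fst p * fst q, snd p * snd q)"

lemma bounded_bilinear_pair_mult: "bounded_bilinear pair_mult"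
proof -
  have "bilinear pair_mult"
    by (auto simp: bilinear_def pair_mult_def intro!: linearI simp: algebra_simps)
  then show ?thesis
    by (rule bilinear_conv_bounded_bilinear[THEN iffD1])
qed

lemma inum_coords_iadd [simp]: "inum_coords (iadd x y) = inum_coords x + inum_coords y"
  and inum_coords_isub [simp]: "inum_coords (isub x y) = inum_coords x - inum_coords y"
  and inum_coords_iscale [simp]: "inum_coords (iscale k x) = k *\<^sub>R inum_coords x"
  and inum_coords_idivr [simp]: "inum_coords (idivr x h) = inum_coords x /\<^sub>R h"
  and inum_coords_imul [simp]: "inum_coords (imul x y) = pair_mult (inum_coords x) (inum_coords y)"
  and inum_coords_izero [simp]: "inum_coords izero = 0"
  using wid_pos[of x] wid_pos[of y]
  by (simp_all add: inum_coords_def pair_mult_def iadd_def isub_def iscale_def idivr_def imul_def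
      izero_def ln_mult ln_div ln_powr ln_inverse zero_prod_def divide_inverse mult.commute)

lemma inum_coords_isum [simp]: "inum_coords (isum g n) = (\<Sum>i = 1..n. inum_coords (g i))"
  by (induction n) auto

lemma idist_eq_dist: "idist x y = dist (inum_coords x) (inum_coords y)"
  by (simp add: idist_def inum_coords_def dist_Pair_Pair dist_real_def)

lemma has_vector_derivative_if_quotient_tendsto:
  fixes f :: "real \<Rightarrow> 'a::real_normed_vector"
  assumes "((\<lambda>y. (f y - f x) /\<^sub>R (y - x)) \<longlongrightarrow> D) (at x within S)"
  shows "(f has_vector_derivative D) (at x within S)"
  unfolding has_vector_derivative_def has_derivative_iff_norm
proof
  show "bounded_linear (\<lambda>h. h *\<^sub>R D)"
    by (rule bounded_linear_scaleR_left)
  have quotient: "((\<lambda>y. norm ((f y - f x) /\<^sub>R (y - x) - D)) \<longlongrightarrow> 0) (at x within S)"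
    using assms by (simp add: tendsto_norm_zero_iff LIM_zero_iff)
  have rewrite: "norm ((f y - f x) /\<^sub>R (y - x) - D) = norm (f y - f x - (y - x) *\<^sub>R D) / norm (y - x)"
    if "y \<noteq> x" for y
  proof -
    have "(f y - f x - (y - x) *\<^sub>R D) /\<^sub>R (y - x)
        = (f y - f x) /\<^sub>R (y - x) - (inverse (y - x) * (y - x)) *\<^sub>R D"
      by (simp add: scaleR_diff_right)
    then have "(f y - f x) /\<^sub>R (y - x) - D = (f y - f x - (y - x) *\<^sub>R D) /\<^sub>R (y - x)"
      using that by simp
    then show ?thesis
      by (simp add: divide_inverse mult.commute)
  qed
  show "((\<lambda>y. norm (f y - f x - (y - x) *\<^sub>R D) / norm (y - x)) \<longlongrightarrow> 0) (at x within S)"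
    by (rule Lim_transform_within[OF quotient zero_less_one]) (simp add: rewrite)
qed

lemma ihas_deriv_within_imp_has_vector_derivative:
  assumes "ihas_deriv_within F D x a b"
  shows "((\<lambda>y. inum_coords (F y)) has_vector_derivative inum_coords D) (at x within {a..b})"
proof (rule has_vector_derivative_if_quotient_tendsto)
  show "((\<lambda>y. (inum_coords (F y) - inum_coords (F x)) /\<^sub>R (y - x)) \<longlongrightarrow> inum_coords D)
      (at x within {a..b})"
    unfolding tendsto_iff eventually_at
  proof (intro allI impI)
    fix \<epsilon> :: real assume "\<epsilon> > 0"
    then obtain \<delta> where "\<delta> > 0" and \<delta>: "\<And>h. h \<noteq> 0 \<Longrightarrow> \<bar>h\<bar> < \<delta> \<Longrightarrow> x + h \<in> {a..b} \<Longrightarrow>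
        idist (idivr (isub (F (x + h)) (F x)) h) D < \<epsilon>"
      using assms unfolding ihas_deriv_within_def by blast
    have "dist ((inum_coords (F y) - inum_coords (F x)) /\<^sub>R (y - x)) (inum_coords D) < \<epsilon>"
      if "y \<in> {a..b}" "y \<noteq> x" "dist y x < \<delta>" for y
      using \<delta>[of "y - x"] that by (simp add: idist_eq_dist dist_real_def)
    with \<open>\<delta> > 0\<close> show "\<exists>\<delta>>0. \<forall>y\<in>{a..b}. y \<noteq> x \<and> dist y x < \<delta> \<longrightarrow>
        dist ((inum_coords (F y) - inum_coords (F x)) /\<^sub>R (y - x)) (inum_coords D) < \<epsilon>"
      by blast
  qed
qed

lemma icontinuous_on_iff_continuous_on:
  "icontinuous_on a b F \<longleftrightarrow> continuous_on {a..b} (\<lambda>y. inum_coords (F y))"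
  by (simp add: icontinuous_on_def continuous_on_iff idist_eq_dist dist_real_def)

lemma iC1_with_deriv_coords:
  assumes "iC1_with_deriv a b F F'"
  shows "\<And>x. x \<in> {a..b} \<Longrightarrow>
      ((\<lambda>t. inum_coords (F t)) has_vector_derivative inum_coords (F' x)) (at x within {a..b})"
    and "continuous_on {a..b} (\<lambda>t. inum_coords (F t))"
    and "continuous_on {a..b} (\<lambda>t. inum_coords (F' t))"
proof -
  show deriv: "((\<lambda>t. inum_coords (F t)) has_vector_derivative inum_coords (F' x)) (at x within {a..b})"
    if "x \<in> {a..b}" for x
    using assms that by (simp add: iC1_with_deriv_def ihas_deriv_within_imp_has_vector_derivative)
  show "continuous_on {a..b} (\<lambda>t. inum_coords (F t))"
    using has_vector_derivative_continuous[OF deriv] by (simp add: continuous_on_eq_continuous_within)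
  show "continuous_on {a..b} (\<lambda>t. inum_coords (F' t))"
    using assms by (simp add: iC1_with_deriv_def icontinuous_on_iff_continuous_on)
qed

definition fine_tagged_partition ::
    "real \<Rightarrow> real \<Rightarrow> real \<Rightarrow> nat \<Rightarrow> (nat \<Rightarrow> real) \<Rightarrow> (nat \<Rightarrow> real) \<Rightarrow> bool" where
  "fine_tagged_partition a b \<delta> n t \<xi> \<longleftrightarrow> t 0 = a \<and> t n = b \<and>
     (\<forall>i\<in>{1..n}. t (i - 1) < t i \<and> t i - t (i - 1) < \<delta> \<and> t (i - 1) \<le> \<xi> i \<and> \<xi> i \<le> t i)"

lemma fine_tagged_partition_Suc:
  assumes "fine_tagged_partition a b \<delta> n t \<xi>" "k < n"
  shows "t k < t (Suc k)" "t (Suc k) - t k < \<delta>" "t k \<le> \<xi> (Suc k)" "\<xi> (Suc k) \<le> t (Suc k)"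
proof -
  have "Suc k \<in> {1..n}"
    using assms(2) by simp
  with assms(1) have "t (Suc k - 1) < t (Suc k) \<and> t (Suc k) - t (Suc k - 1) < \<delta>
      \<and> t (Suc k - 1) \<le> \<xi> (Suc k) \<and> \<xi> (Suc k) \<le> t (Suc k)"
    unfolding fine_tagged_partition_def by blast
  then show "t k < t (Suc k)" "t (Suc k) - t k < \<delta>" "t k \<le> \<xi> (Suc k)" "\<xi> (Suc k) \<le> t (Suc k)"
    by simp_all
qed

lemma fine_tagged_partition_point:
  assumes "fine_tagged_partition a b \<delta> n t \<xi>" "i \<le> n"
  shows "t i \<in> {a..b}"
proof -
  have mono: "t i \<le> t j" if "i \<le> j" "j \<le> n" for i j
    by (rule lift_Suc_mono_le_ivl[where N = "{..<n}"])
      (use that fine_tagged_partition_Suc(1)[OF assms(1)] in \<open>auto intro: less_imp_le\<close>)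
  show ?thesis
    using mono[of 0 i] mono[of i n] assms by (simp add: fine_tagged_partition_def)
qed

lemma integral_minus_tag_bound:
  fixes f :: "real \<Rightarrow> 'a::banach"
  assumes "continuous_on {x..y} f" "x \<le> z" "z \<le> y"
    and "\<And>s. s \<in> {x..y} \<Longrightarrow> dist (f s) (f z) \<le> e"
  shows "norm (integral {x..y} f - (y - x) *\<^sub>R f z) \<le> e * (y - x)"
proof -
  have "((\<lambda>s. f s - f z) has_integral integral {x..y} f - (y - x) *\<^sub>R f z) {x..y}"
    using has_integral_diff[OF integrable_integral[OF integrable_continuous_interval[OF assms(1)]]
        has_integral_const_real[of "f z" x y]] assms(2,3) by simp
  moreover have "0 \<le> e"
    using assms(2,3) assms(4)[of z] by (auto intro: order_trans[OF zero_le_dist])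
  ultimately show ?thesis
    using has_integral_bound[of e "\<lambda>s. f s - f z" _ x y] assms(2-4)
    by (simp add: dist_norm)
qed

lemma integral_fine_tagged_partition_sum:
  fixes f :: "real \<Rightarrow> 'a::banach"
  assumes f: "continuous_on {a..b} f" and P: "fine_tagged_partition a b \<delta> n t \<xi>"
  shows "(\<Sum>k<n. integral {t k..t (Suc k)} f) = integral {a..b} f"
proof -
  define \<Phi> where "\<Phi> x = integral {a..x} f" for x
  note point = fine_tagged_partition_point[OF P]
  have "integral {t k..t (Suc k)} f = \<Phi> (t (Suc k)) - \<Phi> (t k)" if "k < n" for k
  proof -
    have "integral {a..t k} f + integral {t k..t (Suc k)} f = integral {a..t (Suc k)} f"
    proof (rule Henstock_Kurzweil_Integration.integral_combine)
      show "f integrable_on {a..t (Suc k)}"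
        using point[of "Suc k"] \<open>k < n\<close>
        by (intro integrable_continuous_interval continuous_on_subset[OF f]) auto
    qed (use point[of k] fine_tagged_partition_Suc(1)[OF P \<open>k < n\<close>] \<open>k < n\<close> in auto)
    then show ?thesis
      by (simp add: \<Phi>_def algebra_simps)
  qed
  then have "(\<Sum>k<n. integral {t k..t (Suc k)} f) = (\<Sum>k<n. \<Phi> (t (Suc k)) - \<Phi> (t k))"
    by (intro sum.cong) auto
  also have "\<dots> = integral {a..b} f"
    using P sum_lessThan_telescope[of "\<lambda>k. \<Phi> (t k)" n]
    by (simp add: \<Phi>_def fine_tagged_partition_def)
  finally show ?thesis .
qed

lemma riemann_sum_approx_integral:
  fixes f :: "real \<Rightarrow> 'a::banach"
  assumes f: "continuous_on {a..b} f" and "\<epsilon> > 0"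
  obtains \<delta> where "\<delta> > 0"
    "\<And>n t \<xi>. fine_tagged_partition a b \<delta> n t \<xi> \<Longrightarrow>
       dist (\<Sum>i = 1..n. (t i - t (i - 1)) *\<^sub>R f (\<xi> i)) (integral {a..b} f) < \<epsilon>"
proof -
  \<comment> \<open>\<open>\<bar>b - a\<bar> + 1\<close> keeps \<open>e\<close> positive without assuming \<open>a < b\<close>\<close>
  define e where "e = \<epsilon> / (\<bar>b - a\<bar> + 1)"
  have "e > 0"
    using \<open>\<epsilon> > 0\<close> by (simp add: e_def)
  then obtain \<delta> where "\<delta> > 0" and
    \<delta>: "\<And>s s'. s \<in> {a..b} \<Longrightarrow> s' \<in> {a..b} \<Longrightarrow> dist s' s < \<delta> \<Longrightarrow> dist (f s') (f s) < e"
    using compact_uniformly_continuous[OF f compact_Icc] unfolding uniformly_continuous_on_def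
    by metis
  have "dist (\<Sum>i = 1..n. (t i - t (i - 1)) *\<^sub>R f (\<xi> i)) (integral {a..b} f) < \<epsilon>"
    if P: "fine_tagged_partition a b \<delta> n t \<xi>" for n t \<xi>
  proof -
    note step = fine_tagged_partition_Suc[OF P] and point = fine_tagged_partition_point[OF P]
    have piece: "norm (integral {t k..t (Suc k)} f - (t (Suc k) - t k) *\<^sub>R f (\<xi> (Suc k)))
        \<le> e * (t (Suc k) - t k)" if "k < n" for k
    proof (rule integral_minus_tag_bound)
      have sub: "{t k..t (Suc k)} \<subseteq> {a..b}"
        using point[of k] point[of "Suc k"] \<open>k < n\<close> by auto
      then show "continuous_on {t k..t (Suc k)} f"
        by (rule continuous_on_subset[OF f])
      show "dist (f s) (f (\<xi> (Suc k))) \<le> e" if "s \<in> {t k..t (Suc k)}" for s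
        using \<delta>[of "\<xi> (Suc k)" s] step[OF \<open>k < n\<close>] that sub
        by (auto simp: dist_real_def abs_less_iff)
    qed (use step[OF \<open>k < n\<close>] in auto)
    have "dist (\<Sum>i = 1..n. (t i - t (i - 1)) *\<^sub>R f (\<xi> i)) (integral {a..b} f)
        = norm (\<Sum>k<n. integral {t k..t (Suc k)} f - (t (Suc k) - t k) *\<^sub>R f (\<xi> (Suc k)))"
      by (simp add: integral_fine_tagged_partition_sum[OF f P] sum.atLeast1_atMost_eq
          sum_subtractf dist_norm norm_minus_commute)
    also have "\<dots> \<le> (\<Sum>k<n. e * (t (Suc k) - t k))"
      by (rule sum_norm_le) (rule piece, simp)
    also have "\<dots> = e * (b - a)"
      using P sum_lessThan_telescope[of t n]
      by (simp add: sum_distrib_left[symmetric] fine_tagged_partition_def)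
    also have "\<dots> < \<epsilon>"
      using point[of 0] \<open>\<epsilon> > 0\<close> by (simp add: e_def field_simps)
    finally show ?thesis .
  qed
  with \<open>\<delta> > 0\<close> show ?thesis
    using that by blast
qed

lemma integration_by_parts_within:
  fixes prod :: "'a::banach \<Rightarrow> 'b::banach \<Rightarrow> 'c::banach"
  assumes "bounded_bilinear prod" "a \<le> b"
    and f: "\<And>x. x \<in> {a..b} \<Longrightarrow> (f has_vector_derivative f' x) (at x within {a..b})"
    and g: "\<And>x. x \<in> {a..b} \<Longrightarrow> (g has_vector_derivative g' x) (at x within {a..b})"
    and "continuous_on {a..b} f'" "continuous_on {a..b} g'"
  shows "integral {a..b} (\<lambda>x. prod (f' x) (g x)) + integral {a..b} (\<lambda>x. prod (f x) (g' x))
      = prod (f b) (g b) - prod (f a) (g a)"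
proof -
  interpret bounded_bilinear prod by fact
  have "continuous_on {a..b} f" "continuous_on {a..b} g"
    using has_vector_derivative_continuous[OF f] has_vector_derivative_continuous[OF g]
    by (simp_all add: continuous_on_eq_continuous_within)
  with assms(5,6) have "(\<lambda>x. prod (f' x) (g x)) integrable_on {a..b}"
    "(\<lambda>x. prod (f x) (g' x)) integrable_on {a..b}"
    by (auto intro: integrable_continuous_interval continuous_on)
  then have "((\<lambda>x. prod (f x) (g' x) + prod (f' x) (g x)) has_integral
      integral {a..b} (\<lambda>x. prod (f' x) (g x)) + integral {a..b} (\<lambda>x. prod (f x) (g' x))) {a..b}"
    by (subst add.commute) (intro has_integral_add integrable_integral)
  moreover have "((\<lambda>x. prod (f x) (g' x) + prod (f' x) (g x)) has_integral
      prod (f b) (g b) - prod (f a) (g a)) {a..b}"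
    using \<open>a \<le> b\<close> f g by (intro fundamental_theorem_of_calculus has_vector_derivative)
  ultimately show ?thesis
    by (rule has_integral_unique)
qed

lemma ihas_IR_integral_continuous:
  assumes "continuous_on {a..b} (\<lambda>t. inum_coords (f t))"
  shows "ihas_IR_integral f (inum_of_coords (integral {a..b} (\<lambda>t. inum_coords (f t)))) a b"
  unfolding ihas_IR_integral_def
proof (intro allI impI)
  fix \<epsilon> :: real assume "\<epsilon> > 0"
  with assms obtain \<delta> where "\<delta> > 0" and
    \<delta>: "\<And>n t \<xi>. fine_tagged_partition a b \<delta> n t \<xi> \<Longrightarrow>
       dist (\<Sum>i = 1..n. (t i - t (i - 1)) *\<^sub>R inum_coords (f (\<xi> i)))
         (integral {a..b} (\<lambda>t. inum_coords (f t))) < \<epsilon>"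
    by (rule riemann_sum_approx_integral) blast
  then show "\<exists>\<delta>>0. \<forall>n t \<xi>. t 0 = a \<and> t n = b \<and>
      (\<forall>i\<in>{1..n}. t (i - 1) < t i \<and> t i - t (i - 1) < \<delta> \<and> t (i - 1) \<le> \<xi> i \<and> \<xi> i \<le> t i) \<longrightarrow>
      idist (isum (\<lambda>i. iscale (t i - t (i - 1)) (f (\<xi> i))) n)
        (inum_of_coords (integral {a..b} (\<lambda>t. inum_coords (f t)))) < \<epsilon>"
    by (auto simp: idist_eq_dist fine_tagged_partition_def)
qed

theorem theorem5p11:
  fixes F G F' G' :: "real \<Rightarrow> inum" and a b :: real
  assumes "a < b"
    and "iC1_with_deriv a b F F'"
    and "iC1_with_deriv a b G G'"
  shows "\<exists>A B. ihas_IR_integral (\<lambda>t. imul (F' t) (G t)) A a b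
             \<and> ihas_IR_integral (\<lambda>t. imul (F t) (G' t)) B a b
             \<and> isub (imul (F b) (G b)) (imul (F a) (G a)) = iadd A B"
proof -
  note F = iC1_with_deriv_coords[OF assms(2)] and G = iC1_with_deriv_coords[OF assms(3)]
  interpret pm: bounded_bilinear pair_mult
    by (rule bounded_bilinear_pair_mult)
  let ?A = "inum_of_coords (integral {a..b} (\<lambda>t. inum_coords (imul (F' t) (G t))))"
  let ?B = "inum_of_coords (integral {a..b} (\<lambda>t. inum_coords (imul (F t) (G' t))))"
  have "ihas_IR_integral (\<lambda>t. imul (F' t) (G t)) ?A a b"
    by (rule ihas_IR_integral_continuous) (simp add: pm.continuous_on F(3) G(2))
  moreover have "ihas_IR_integral (\<lambda>t. imul (F t) (G' t)) ?B a b"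
    by (rule ihas_IR_integral_continuous) (simp add: pm.continuous_on F(2) G(3))
  moreover have "isub (imul (F b) (G b)) (imul (F a) (G a)) = iadd ?A ?B"
    using integration_by_parts_within[OF bounded_bilinear_pair_mult _ F(1) G(1) F(3) G(3)] \<open>a < b\<close>
    by (intro injD[OF inj_inum_coords]) simp
  ultimately show ?thesis
    by blast
qed

end
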